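(* Let $\Omega=(0,1)$ and for $h=1/N$, $N\in\mathbb N$, let $Y_h\subset H^1_0(0,1)\cap H^2(0,1)$ be the space of $C^1$ piecewise quadratic splines on the uniform mesh with nodes $k/N$, vanishing at $0$ and $1$. For $\overline{y}\in L^2(0,1)$ and $\varrho=h^4$ let $y_{\varrho h}\in Y_h$ satisfy $$\int_0^1 y_{\varrho h}y_h\,dx+\varrho\int_0^1 y_{\varrho h}''y_h''\,dx=\int_0^1\overline{y}\,y_h\,dx\quad\text{for all }y_h\in Y_h.$$ Then $\|y_{\varrho h}-\overline{y}\|_{L^2(0,1)}\le c\|\overline{y}\|_{L^2(0,1)}$ for $\overline{y}\in L^2(0,1)$, $\|y_{\varrho h}-\overline{y}\|_{L^2(0,1)}\le c\,h^2\|\overline{y}''\|_{L^2(0,1)}$ for $\overline{y}\in H^1_0(0,1)\cap H^2(0,1)$, and $\|y_{\varrho h}-\overline{y}\|_{L^2(0,1)}\le c\,h^{2s}\|\overline{y}\|_{[L^2(0,1),H^1_0(0,1)\cap H^2(0,1)]_s}$ for $\overline{y}\in[L^2(0,1),H^1_0(0,1)\cap H^2(0,1)]_s$, $s\in[0,1]$, with $c$ independent of $h$ and $\overline{y}$.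
   Context: $H^1_0(0,1)\cap H^2(0,1)$ is normed by $\|y''\|_{L^2(0,1)}$; $[\cdot,\cdot]_s$ denotes interpolation of exponent $s$ (e.g. the real $K$-method). The discrete problem is the state-based optimality condition for minimizing $\frac12\|y-\overline y\|_{L^2}^2+\frac\varrho2\|u\|_{L^2}^2$ subject to $-y''=u$, $y(0)=y(1)=0$. *)

theory Defs
  imports "HOL-Analysis.Analysis"
begin

text \<open>The interval is the closed interval [0,1] (measure-theoretically the same as (0,1)).\<close>

definition L2 :: "(real \<Rightarrow> real) \<Rightarrow> bool" where
  "L2 f \<longleftrightarrow> f \<in> borel_measurable (lebesgue_on {0..1})
     \<and> integrable (lebesgue_on {0..1}) (\<lambda>x. (f x)\<^sup>2)"

definition L2norm :: "(real \<Rightarrow> real) \<Rightarrow> real" where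
  "L2norm f = sqrt (integral\<^sup>L (lebesgue_on {0..1}) (\<lambda>x. (f x)\<^sup>2))"

text \<open>H2_0 y g: y belongs to H^1_0(0,1) \<inter> H^2(0,1) with second (weak) derivative g,
  i.e. g is in L2, y' is absolutely continuous with y'' = g, y is absolutely continuous
  with derivative y', and y(0) = y(1) = 0.\<close>
definition H2_0 :: "(real \<Rightarrow> real) \<Rightarrow> (real \<Rightarrow> real) \<Rightarrow> bool" where
  "H2_0 y g \<longleftrightarrow> L2 g \<and> y 0 = 0 \<and> y 1 = 0 \<and>
     (\<exists>y1. \<forall>x\<in>{0..1}.
        y1 x = y1 0 + integral\<^sup>L (lebesgue_on {0..x}) g \<and>
        y x = y 0 + integral\<^sup>L (lebesgue_on {0..x}) y1)"

definition spline_space :: "nat \<Rightarrow> (real \<Rightarrow> real) set" where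
  "spline_space N = {y. y 0 = 0 \<and> y 1 = 0 \<and>
     (\<exists>y'. continuous_on {0..1} y' \<and>
        (\<forall>x\<in>{0..1}. (y has_real_derivative y' x) (at x within {0..1}))) \<and>
     (\<forall>k<N. \<exists>a b c. \<forall>x\<in>{real k / real N .. real (Suc k) / real N}.
        y x = a + b * x + c * x\<^sup>2)}"

definition discrete_sol :: "nat \<Rightarrow> real \<Rightarrow> (real \<Rightarrow> real) \<Rightarrow> (real \<Rightarrow> real) \<Rightarrow> bool" where
  "discrete_sol N \<rho> ybar y \<longleftrightarrow> y \<in> spline_space N \<and>
     (\<forall>yh \<in> spline_space N. \<forall>g gh. H2_0 y g \<longrightarrow> H2_0 yh gh \<longrightarrow>
        integral\<^sup>L (lebesgue_on {0..1}) (\<lambda>x. y x * yh x)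
        + \<rho> * integral\<^sup>L (lebesgue_on {0..1}) (\<lambda>x. g x * gh x)
        = integral\<^sup>L (lebesgue_on {0..1}) (\<lambda>x. ybar x * yh x))"

text \<open>K-functional of the couple (L2, H^1_0 \<inter> H^2), the latter normed by the L2 norm of y''.\<close>
definition Kfun :: "real \<Rightarrow> (real \<Rightarrow> real) \<Rightarrow> real" where
  "Kfun t u = Inf {L2norm (\<lambda>x. u x - v x) + t * L2norm g | v g. H2_0 v g}"

definition Kint :: "real \<Rightarrow> (real \<Rightarrow> real) \<Rightarrow> ennreal" where
  "Kint s u = (\<integral>\<^sup>+ t. ennreal ((t powr (- s) * Kfun t u)\<^sup>2 / t) \<partial>(lebesgue_on {0<..}))"

text \<open>Real interpolation space [L2, H^1_0 \<inter> H^2]_s = (L2, H^1_0 \<inter> H^2)_{s,2}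
  (K-method), with the usual endpoint conventions for s = 0 and s = 1.\<close>
definition interp_space :: "real \<Rightarrow> (real \<Rightarrow> real) set" where
  "interp_space s = {u. L2 u \<and>
     (if s = 0 then True
      else if s = 1 then (\<exists>v g. H2_0 v g \<and> (AE x in lebesgue_on {0..1}. u x = v x))
      else Kint s u < \<infinity>)}"

definition interp_norm :: "real \<Rightarrow> (real \<Rightarrow> real) \<Rightarrow> real" where
  "interp_norm s u =
     (if s = 0 then L2norm u
      else if s = 1 then Inf {L2norm g | v g. H2_0 v g \<and> (AE x in lebesgue_on {0..1}. u x = v x)}
      else sqrt (enn2real (Kint s u)))"

end

theory Submission
  imports Defs
begin

text \<open>The discrete solution is a Galerkin projection for the energy
  \<open>\<integral>(y - ybar)\<^sup>2 + \<rho> \<integral>(y'')\<^sup>2\<close>, so its squared error is at most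
  \<open>\<integral>(z - ybar)\<^sup>2 + h\<^sup>4 \<integral>(z'')\<^sup>2\<close> for every spline \<open>z\<close>. For
  \<open>v \<in> H\<^sup>1\<^sub>0 \<inter> H\<^sup>2\<close> the quasi-interpolant \<open>z\<close> whose derivative is the piecewise linear
  interpolant of averaged cell means of \<open>v'\<close> satisfies \<open>\<parallel>z - v\<parallel> \<le> c h\<^sup>2 \<parallel>v''\<parallel>\<close> and
  \<open>\<parallel>z''\<parallel> \<le> c \<parallel>v''\<parallel>\<close>. Hence the error is at most \<open>15 (\<parallel>ybar - v\<parallel> + h\<^sup>2 \<parallel>v''\<parallel>)\<close>
  for every such \<open>v\<close>, i.e. at most \<open>15 K(h\<^sup>2, ybar)\<close>, and all three estimates follow from
  \<open>K(t, u) \<le> 3 t\<^sup>s \<parallel>u\<parallel>\<^sub>s\<close>. For \<open>0 < s < 1\<close> this holds because \<open>K(\<cdot>, u)\<close> is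
  nondecreasing, so the part over \<open>[t, 2t]\<close> of the integral defining \<open>\<parallel>u\<parallel>\<^sub>s\<^sup>2\<close> is
  already at least \<open>K(t, u)\<^sup>2 / (8 t\<^sup>2\<^sup>s)\<close>.\<close>

section \<open>Square-integrable functions on the unit interval\<close>

abbreviation lebesgue01 :: "real measure" where
  "lebesgue01 \<equiv> lebesgue_on {0..1}"

lemma L2_imp_integrable_square: "L2 f \<Longrightarrow> integrable lebesgue01 (\<lambda>x. (f x)\<^sup>2)"
  by (simp add: L2_def)

lemma integrable_L2_mult:
  assumes "L2 f" "L2 g"
  shows "integrable lebesgue01 (\<lambda>x. f x * g x)"
proof (rule Bochner_Integration.integrable_bound[where f="\<lambda>x. (f x)\<^sup>2 + (g x)\<^sup>2"])
  show "integrable lebesgue01 (\<lambda>x. (f x)\<^sup>2 + (g x)\<^sup>2)"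
    using assms by (simp add: L2_def)
  show "(\<lambda>x. f x * g x) \<in> borel_measurable lebesgue01"
    using assms by (simp add: L2_def borel_measurable_times)
  have "\<bar>f x\<bar> * \<bar>g x\<bar> \<le> (f x)\<^sup>2 + (g x)\<^sup>2" for x
  proof -
    have "2 * (\<bar>f x\<bar> * \<bar>g x\<bar>) \<le> (f x)\<^sup>2 + (g x)\<^sup>2"
      using sum_squares_bound[of "\<bar>f x\<bar>" "\<bar>g x\<bar>"] by (simp add: mult.assoc)
    moreover have "0 \<le> \<bar>f x\<bar> * \<bar>g x\<bar>" by simp
    ultimately show ?thesis by linarith
  qed
  then show "AE x in lebesgue01. norm (f x * g x) \<le> norm ((f x)\<^sup>2 + (g x)\<^sup>2)"
    by (intro AE_I2) (simp add: abs_mult)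
qed

lemma L2_cmult: "L2 f \<Longrightarrow> L2 (\<lambda>x. c * f x)"
  by (auto simp: L2_def power_mult_distrib)

lemma L2_add:
  assumes "L2 f" "L2 g"
  shows "L2 (\<lambda>x. f x + g x)"
proof -
  have "integrable lebesgue01 (\<lambda>x. (f x)\<^sup>2 + (g x)\<^sup>2 + (2 * f x) * g x)"
    using assms integrable_L2_mult[OF L2_cmult[OF assms(1)] assms(2)] by (simp add: L2_def)
  then show ?thesis
    using assms by (auto simp: L2_def power2_sum mult.assoc)
qed

lemma L2_diff: "L2 f \<Longrightarrow> L2 g \<Longrightarrow> L2 (\<lambda>x. f x - g x)"
  using L2_add[of f "\<lambda>x. -1 * g x"] L2_cmult[of g "-1"] by simp

lemma L2_continuous_on: "continuous_on {0..1} f \<Longrightarrow> L2 f"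
  unfolding L2_def
  by (metis borel_measurable_integrable continuous_imp_integrable_real continuous_on_power)

lemma integrable_L2: "L2 f \<Longrightarrow> integrable lebesgue01 f"
  using integrable_L2_mult[of f "\<lambda>x. 1"] L2_continuous_on[of "\<lambda>x. 1"] by simp

lemma L2norm_nonneg: "0 \<le> L2norm f"
  by (simp add: L2norm_def)

lemma L2norm_square: "(L2norm f)\<^sup>2 = integral\<^sup>L lebesgue01 (\<lambda>x. (f x)\<^sup>2)"
  by (simp add: L2norm_def integral_nonneg_AE)

lemma L2norm_le:
  assumes "integral\<^sup>L lebesgue01 (\<lambda>x. (f x)\<^sup>2) \<le> B\<^sup>2" "0 \<le> B"
  shows "L2norm f \<le> B"
  using assms real_sqrt_le_mono unfolding L2norm_def by fastforce

lemma L2norm_zero: "L2norm (\<lambda>x. 0) = 0"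
  by (simp add: L2norm_def)

lemma L2norm_AE_eq: "AE x in lebesgue01. u x = v x \<Longrightarrow> L2norm (\<lambda>x. u x - v x) = 0"
  unfolding L2norm_def by (subst integral_eq_zero_AE) (auto elim: AE_mp)

lemma integrable_lebesgue01_subinterval:
  fixes f :: "real \<Rightarrow> real"
  assumes "integrable lebesgue01 f" "0 \<le> a" "b \<le> 1"
  shows "f integrable_on {a..b}"
    and "integral\<^sup>L (lebesgue_on {a..b}) f = integral {a..b} f"
proof -
  have "f absolutely_integrable_on {0..1}"
    using assms(1) by (simp add: set_integrable_def integrable_restrict_space)
  then have "f absolutely_integrable_on {a..b}"
    using absolutely_integrable_on_subinterval assms by fastforce
  then have i: "integrable (lebesgue_on {a..b}) f"
    by (simp add: absolutely_integrable_imp_integrable)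
  show "f integrable_on {a..b}"
    using integrable_on_lebesgue_on[OF i] by simp
  show "integral\<^sup>L (lebesgue_on {a..b}) f = integral {a..b} f"
    by (rule lebesgue_integral_eq_integral[OF i]) simp
qed

lemma L2_integrable_on:
  "L2 g \<Longrightarrow> 0 \<le> a \<Longrightarrow> b \<le> 1 \<Longrightarrow> g integrable_on {a..b}"
  using integrable_lebesgue01_subinterval(1)[OF integrable_L2] by blast

lemma L2_integral_eq:
  "L2 g \<Longrightarrow> 0 \<le> a \<Longrightarrow> b \<le> 1 \<Longrightarrow> integral\<^sup>L (lebesgue_on {a..b}) g = integral {a..b} g"
  using integrable_lebesgue01_subinterval(2)[OF integrable_L2] by blast

lemma L2_square_integral_eq:
  "L2 g \<Longrightarrow> integral\<^sup>L lebesgue01 (\<lambda>x. (g x)\<^sup>2) = integral {0..1} (\<lambda>x. (g x)\<^sup>2)"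
  using integrable_lebesgue01_subinterval(2)[OF L2_imp_integrable_square] by simp

lemma square_add_le: "((a::real) + b)\<^sup>2 \<le> 2 * a\<^sup>2 + 2 * b\<^sup>2"
proof -
  have "2 * a\<^sup>2 + 2 * b\<^sup>2 - (a + b)\<^sup>2 = (a - b)\<^sup>2"
    by (simp add: power2_eq_square algebra_simps)
  then show ?thesis by (metis diff_ge_0_iff_ge zero_le_power2)
qed

lemma square_add3_le: "((a::real) + b + c)\<^sup>2 \<le> 3 * (a\<^sup>2 + b\<^sup>2 + c\<^sup>2)"
proof -
  have "3 * (a\<^sup>2 + b\<^sup>2 + c\<^sup>2) - (a + b + c)\<^sup>2 = (a - b)\<^sup>2 + (b - c)\<^sup>2 + (a - c)\<^sup>2"
    by (simp add: power2_eq_square algebra_simps)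
  moreover have "0 \<le> (a - b)\<^sup>2 + (b - c)\<^sup>2 + (a - c)\<^sup>2" by simp
  ultimately show ?thesis by linarith
qed

lemma square_le_of_abs_le: "\<bar>x::real\<bar> \<le> B \<Longrightarrow> x\<^sup>2 \<le> B\<^sup>2"
  using power_mono[of "\<bar>x\<bar>" B 2] by simp

lemma integral_square_add:
  assumes p: "L2 p" and q: "L2 q"
  shows "integral\<^sup>L lebesgue01 (\<lambda>x. (p x + q x)\<^sup>2) = integral\<^sup>L lebesgue01 (\<lambda>x. (p x)\<^sup>2)
     + 2 * integral\<^sup>L lebesgue01 (\<lambda>x. p x * q x) + integral\<^sup>L lebesgue01 (\<lambda>x. (q x)\<^sup>2)"
proof -
  have "(\<lambda>x. (p x + q x)\<^sup>2) = (\<lambda>x. (p x)\<^sup>2 + 2 * (p x * q x) + (q x)\<^sup>2)"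
    by (simp add: fun_eq_iff power2_sum)
  then show ?thesis
    using L2_imp_integrable_square[OF p] L2_imp_integrable_square[OF q] integrable_L2_mult[OF p q]
    by simp
qed

lemma integral_L2_mult_diff:
  assumes "L2 p" "L2 q" "L2 w"
  shows "integral\<^sup>L lebesgue01 (\<lambda>x. (p x - q x) * w x)
    = integral\<^sup>L lebesgue01 (\<lambda>x. p x * w x) - integral\<^sup>L lebesgue01 (\<lambda>x. q x * w x)"
  using integrable_L2_mult[OF assms(1,3)] integrable_L2_mult[OF assms(2,3)]
  by (simp add: left_diff_distrib)

lemma integral_square_diff_le:
  assumes "L2 a" "L2 b" "L2 c"
  shows "integral\<^sup>L lebesgue01 (\<lambda>x. (a x - c x)\<^sup>2)
    \<le> 2 * integral\<^sup>L lebesgue01 (\<lambda>x. (a x - b x)\<^sup>2) + 2 * integral\<^sup>L lebesgue01 (\<lambda>x. (b x - c x)\<^sup>2)"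
proof -
  have int: "integrable lebesgue01 (\<lambda>x. (a x - b x)\<^sup>2)" "integrable lebesgue01 (\<lambda>x. (b x - c x)\<^sup>2)"
    using assms by (auto intro: L2_imp_integrable_square L2_diff)
  have "integral\<^sup>L lebesgue01 (\<lambda>x. (a x - c x)\<^sup>2)
      \<le> integral\<^sup>L lebesgue01 (\<lambda>x. 2 * (a x - b x)\<^sup>2 + 2 * (b x - c x)\<^sup>2)"
  proof (rule integral_mono)
    show "integrable lebesgue01 (\<lambda>x. (a x - c x)\<^sup>2)"
      using assms by (auto intro: L2_imp_integrable_square L2_diff)
    show "(a x - c x)\<^sup>2 \<le> 2 * (a x - b x)\<^sup>2 + 2 * (b x - c x)\<^sup>2" for x
      using square_add_le[of "a x - b x" "b x - c x"] by simp
  qed (use int in simp)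
  also have "\<dots> = 2 * integral\<^sup>L lebesgue01 (\<lambda>x. (a x - b x)\<^sup>2)
      + 2 * integral\<^sup>L lebesgue01 (\<lambda>x. (b x - c x)\<^sup>2)"
    using int by simp
  finally show ?thesis .
qed

lemma integral_abs_square_le:
  fixes f :: "real \<Rightarrow> real"
  assumes ab: "a \<le> b" and abs_int: "(\<lambda>x. \<bar>f x\<bar>) integrable_on {a..b}"
    and sq_int: "(\<lambda>x. (f x)\<^sup>2) integrable_on {a..b}"
  shows "(integral {a..b} (\<lambda>x. \<bar>f x\<bar>))\<^sup>2 \<le> (b - a) * integral {a..b} (\<lambda>x. (f x)\<^sup>2)"
proof (cases "a = b")
  case False
  then have h: "0 < b - a" using ab by simp
  define G where "G = integral {a..b} (\<lambda>x. \<bar>f x\<bar>)"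
  define C where "C = integral {a..b} (\<lambda>x. (f x)\<^sup>2)"
  define m where "m = G / (b - a)"
  have int: "(\<lambda>x. 2 * m * \<bar>f x\<bar>) integrable_on {a..b}"
    using integrable_on_cmult_left[OF abs_int, of "2 * m"] by simp
  text \<open>Expand \<open>0 \<le> \<integral>(\<bar>f\<bar> - m)\<^sup>2\<close> with \<open>m\<close> the mean of \<open>\<bar>f\<bar>\<close>.\<close>
  have "0 \<le> integral {a..b} (\<lambda>x. ((f x)\<^sup>2 - 2 * m * \<bar>f x\<bar>) + m\<^sup>2)"
  proof (rule integral_nonneg)
    show "(\<lambda>x. ((f x)\<^sup>2 - 2 * m * \<bar>f x\<bar>) + m\<^sup>2) integrable_on {a..b}"
      using sq_int int by (intro integrable_add integrable_diff integrable_const_ivl)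
    fix x
    have "((f x)\<^sup>2 - 2 * m * \<bar>f x\<bar>) + m\<^sup>2 = (\<bar>f x\<bar> - m)\<^sup>2"
      by (simp add: power2_diff)
    then show "0 \<le> ((f x)\<^sup>2 - 2 * m * \<bar>f x\<bar>) + m\<^sup>2" by simp
  qed
  also have "\<dots> = integral {a..b} (\<lambda>x. (f x)\<^sup>2 - 2 * m * \<bar>f x\<bar>) + (b - a) * m\<^sup>2"
    using integral_add[OF integrable_diff[OF sq_int int] integrable_const_ivl] ab by simp
  also have "\<dots> = C - 2 * m * G + (b - a) * m\<^sup>2"
    unfolding C_def G_def using integral_diff[OF sq_int int] by (simp add: integral_mult_right)
  also have "\<dots> = C - G\<^sup>2 / (b - a)"
  proof -
    have "2 * m * G = 2 * G\<^sup>2 / (b - a)" "(b - a) * m\<^sup>2 = G\<^sup>2 / (b - a)"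
      unfolding m_def using h by (simp_all add: power2_eq_square)
    then show ?thesis by simp
  qed
  finally have "G\<^sup>2 \<le> C * (b - a)" using h by (simp add: divide_le_eq)
  then show ?thesis unfolding G_def C_def by (simp add: mult.commute)
qed simp

lemma continuous_on_indefinite_integral_L2:
  assumes "L2 g" "\<forall>x\<in>{0..1}. y x = y 0 + integral {0..x} g"
  shows "continuous_on {0..1} y"
proof -
  have "continuous_on {0..1} (\<lambda>x. y 0 + integral {0..x} g)"
    using indefinite_integral_continuous_1[OF L2_integrable_on[OF assms(1)]]
    by (intro continuous_intros) auto
  then show ?thesis
    by (rule continuous_on_eq) (use assms(2) in metis)
qed

section \<open>The space \<open>H\<^sup>1\<^sub>0 \<inter> H\<^sup>2\<close>\<close>

lemma H2_0_iff:
  assumes "L2 g"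
  shows "H2_0 y g \<longleftrightarrow> y 0 = 0 \<and> y 1 = 0 \<and>
     (\<exists>y'. \<forall>x\<in>{0..1}. y' x = y' 0 + integral {0..x} g \<and> y x = y 0 + integral {0..x} y')"
proof -
  have g_eq: "integral\<^sup>L (lebesgue_on {0..x}) g = integral {0..x} g" if "x \<in> {0..1}" for x
    using L2_integral_eq[OF assms] that by simp
  have y'_eq: "integral\<^sup>L (lebesgue_on {0..x}) y' = integral {0..x} y'"
    if "x \<in> {0..1}" "\<forall>x\<in>{0..1}. y' x = y' 0 + integral {0..x} g" for x y'
    using continuous_on_indefinite_integral_L2[OF assms that(2)] that(1)
    by (intro lebesgue_integral_eq_integral continuous_imp_integrable_real)
       (auto elim: continuous_on_subset)
  have first_iff: "(\<forall>x\<in>{0..1}. y' x = y' 0 + integral\<^sup>L (lebesgue_on {0..x}) g) \<longleftrightarrow>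
      (\<forall>x\<in>{0..1}. y' x = y' 0 + integral {0..x} g)" for y'
    using g_eq by simp
  have second_iff: "(\<forall>x\<in>{0..1}. y x = y 0 + integral\<^sup>L (lebesgue_on {0..x}) y') \<longleftrightarrow>
      (\<forall>x\<in>{0..1}. y x = y 0 + integral {0..x} y')"
    if "\<forall>x\<in>{0..1}. y' x = y' 0 + integral {0..x} g" for y'
    using y'_eq[OF _ that] by simp
  have both_iff: "(\<forall>x\<in>{0..1}. y' x = y' 0 + integral\<^sup>L (lebesgue_on {0..x}) g \<and>
          y x = y 0 + integral\<^sup>L (lebesgue_on {0..x}) y') \<longleftrightarrow>
        (\<forall>x\<in>{0..1}. y' x = y' 0 + integral {0..x} g \<and> y x = y 0 + integral {0..x} y')" for y'
    unfolding ball_conj_distrib using first_iff second_iff by blast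
  show ?thesis
    unfolding H2_0_def both_iff using assms by blast
qed

lemma H2_0I:
  assumes "L2 g" "y 0 = 0" "y 1 = 0" "\<forall>x\<in>{0..1}. y' x = y' 0 + integral {0..x} g"
    "\<forall>x\<in>{0..1}. y x = integral {0..x} y'"
  shows "H2_0 y g"
proof -
  have "\<forall>x\<in>{0..1}. y x = y 0 + integral {0..x} y'"
    using assms(2,5) by simp
  then show ?thesis
    unfolding H2_0_iff[OF assms(1)] using assms(2-4) by blast
qed

lemma H2_0E:
  assumes "H2_0 y g"
  obtains y' where "L2 g" "y 0 = 0" "y 1 = 0" "continuous_on {0..1} y'"
    "\<forall>x\<in>{0..1}. y' x = y' 0 + integral {0..x} g" "\<forall>x\<in>{0..1}. y x = integral {0..x} y'"
proof -
  have g: "L2 g" using assms by (simp add: H2_0_def)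
  then obtain y' where y: "y 0 = 0" "y 1 = 0"
      "\<forall>x\<in>{0..1}. y' x = y' 0 + integral {0..x} g \<and> y x = y 0 + integral {0..x} y'"
    using assms unfolding H2_0_iff[OF g] by blast
  have y': "\<forall>x\<in>{0..1}. y' x = y' 0 + integral {0..x} g"
    using y(3) by blast
  have "\<forall>x\<in>{0..1}. y x = y 0 + integral {0..x} y'"
    using y(3) by blast
  then have "\<forall>x\<in>{0..1}. y x = integral {0..x} y'"
    using y(1) by simp
  then show ?thesis
    by (rule that[OF g y(1,2) continuous_on_indefinite_integral_L2[OF g y'] y'])
qed

lemma H2_0_piecewise_C2I:
  assumes g: "L2 g" and y0: "y 0 = 0" and y1: "y 1 = 0" and S: "finite S"
    and y'_cont: "continuous_on {0..1} y'"
    and y_deriv: "\<And>x. x \<in> {0..1} \<Longrightarrow> (y has_real_derivative y' x) (at x within {0..1})"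
    and y'_deriv: "\<And>x. x \<in> {0<..<1} - S \<Longrightarrow> (y' has_real_derivative g x) (at x)"
  shows "H2_0 y g"
proof (rule H2_0I[OF g y0 y1])
  show "\<forall>x\<in>{0..1}. y' x = y' 0 + integral {0..x} g"
  proof
    fix x :: real assume x: "x \<in> {0..1}"
    have "(g has_integral y' x - y' 0) {0..x}"
    proof (rule fundamental_theorem_of_calculus_strong[of "S \<union> {0, 1}"])
      show "continuous_on {0..x} y'" using y'_cont x by (auto elim: continuous_on_subset)
      fix t assume "t \<in> {0..x} - (S \<union> {0, 1})"
      then have "t \<in> {0<..<1} - S" using x by auto
      then show "(y' has_vector_derivative g t) (at t)"
        using y'_deriv by (simp add: has_real_derivative_iff_has_vector_derivative)
    qed (use S x in auto)
    then show "y' x = y' 0 + integral {0..x} g" by (simp add: integral_unique)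
  qed
  show "\<forall>x\<in>{0..1}. y x = integral {0..x} y'"
  proof
    fix x :: real assume x: "x \<in> {0..1}"
    have "(y' has_integral y x - y 0) {0..x}"
    proof (rule fundamental_theorem_of_calculus)
      fix t assume "t \<in> {0..x}"
      then have "(y has_real_derivative y' t) (at t within {0..x})"
        using y_deriv[of t] x by (auto intro: DERIV_subset)
      then show "(y has_vector_derivative y' t) (at t within {0..x})"
        by (simp add: has_real_derivative_iff_has_vector_derivative)
    qed (use x in auto)
    then show "y x = integral {0..x} y'" using y0 by (simp add: integral_unique)
  qed
qed

lemma H2_0_zero: "H2_0 (\<lambda>x. 0) (\<lambda>x. 0)"
  by (rule H2_0I[where y'="\<lambda>x. 0"]) (auto intro: L2_continuous_on)

lemma H2_0_diff:
  assumes "H2_0 a ga" "H2_0 b gb"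
  shows "H2_0 (\<lambda>x. a x - b x) (\<lambda>x. ga x - gb x)"
proof -
  obtain a' where a: "L2 ga" "a 0 = 0" "a 1 = 0" "continuous_on {0..1} a'"
    "\<forall>x\<in>{0..1}. a' x = a' 0 + integral {0..x} ga" "\<forall>x\<in>{0..1}. a x = integral {0..x} a'"
    using assms(1) by (rule H2_0E)
  obtain b' where b: "L2 gb" "b 0 = 0" "b 1 = 0" "continuous_on {0..1} b'"
    "\<forall>x\<in>{0..1}. b' x = b' 0 + integral {0..x} gb" "\<forall>x\<in>{0..1}. b x = integral {0..x} b'"
    using assms(2) by (rule H2_0E)
  show ?thesis
  proof (rule H2_0I[where y'="\<lambda>x. a' x - b' x"])
    show "\<forall>x\<in>{0..1}. a' x - b' x = (a' 0 - b' 0) + integral {0..x} (\<lambda>x. ga x - gb x)"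
    proof
      fix x :: real assume x: "x \<in> {0..1}"
      have "a' x = a' 0 + integral {0..x} ga" "b' x = b' 0 + integral {0..x} gb"
        using a(5) b(5) x by blast+
      moreover have "ga integrable_on {0..x}" "gb integrable_on {0..x}"
        using a(1) b(1) x by (auto intro: L2_integrable_on)
      ultimately show "a' x - b' x = (a' 0 - b' 0) + integral {0..x} (\<lambda>x. ga x - gb x)"
        by (simp add: integral_diff)
    qed
    show "\<forall>x\<in>{0..1}. a x - b x = integral {0..x} (\<lambda>x. a' x - b' x)"
    proof
      fix x :: real assume x: "x \<in> {0..1}"
      have "a' integrable_on {0..x}" "b' integrable_on {0..x}"
        using a(4) b(4) x by (auto intro!: integrable_continuous_real elim!: continuous_on_subset)
      then show "a x - b x = integral {0..x} (\<lambda>x. a' x - b' x)"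
        using a(6) b(6) x by (simp add: integral_diff)
    qed
  qed (use a b L2_diff in auto)
qed

lemma H2_0_imp_continuous_on: "H2_0 y g \<Longrightarrow> continuous_on {0..1} y"
  by (erule H2_0E) (metis (no_types, lifting) continuous_on_eq indefinite_integral_continuous_1
      integrable_continuous_real)

lemma H2_0_imp_L2: "H2_0 y g \<Longrightarrow> L2 y"
  by (rule L2_continuous_on[OF H2_0_imp_continuous_on])

lemma H2_0_imp_L2_second_deriv: "H2_0 y g \<Longrightarrow> L2 g"
  by (simp add: H2_0_def)

section \<open>Quadratic splines and the discrete problem\<close>

definition mesh_nodes :: "nat \<Rightarrow> real set" where
  "mesh_nodes N = (\<lambda>k. real k / real N) ` {..N}"

lemma finite_mesh_nodes: "finite (mesh_nodes N)"
  by (simp add: mesh_nodes_def)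

lemma mesh_cell_exists:
  assumes N: "N \<ge> 1" and x: "x \<in> {0..1}"
  obtains k where "k < N" "real k / real N \<le> x" "x \<le> real (Suc k) / real N"
proof (cases "x = 1")
  case True
  then show ?thesis using N by (intro that[of "N - 1"]) (auto simp: of_nat_diff)
next
  case False
  define k where "k = nat \<lfloor>x * real N\<rfloor>"
  have Np: "real N > 0" using N by simp
  have "0 \<le> x * real N" using x Np by simp
  then have k: "real k \<le> x * real N" "x * real N < real k + 1"
    unfolding k_def by linarith+
  have "x * real N < 1 * real N"
    using False x Np by (intro mult_strict_right_mono) auto
  then have "k < N" using k by linarith
  with k Np show ?thesis by (intro that[of k]) (auto simp: field_simps)
qed

lemma mesh_cell_open:
  assumes N: "N \<ge> 1" and x: "x \<in> {0..1} - mesh_nodes N"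
  obtains k where "k < N" "real k / real N < x" "x < real (Suc k) / real N"
proof -
  obtain k where k: "k < N" "real k / real N \<le> x" "x \<le> real (Suc k) / real N"
    using mesh_cell_exists[OF N] x by blast
  have "x \<noteq> real k / real N" "x \<noteq> real (Suc k) / real N"
    using x k(1) unfolding mesh_nodes_def by (auto simp del: of_nat_Suc)
  then show ?thesis using k that by auto
qed

lemma integral_sum_mesh_cells:
  fixes f :: "real \<Rightarrow> real"
  assumes N: "N \<ge> 1" and f: "f integrable_on {0..1}"
  shows "integral {0..1} f = (\<Sum>k<N. integral {real k / real N .. real (Suc k) / real N} f)"
proof -
  have Np: "real N > 0" using N by simp
  have "integral {0..real m / real N} f
      = (\<Sum>k<m. integral {real k / real N .. real (Suc k) / real N} f)" if "m \<le> N" for m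
    using that
  proof (induction m)
    case (Suc m)
    have "real (Suc m) / real N \<le> 1" "real m / real N \<le> real (Suc m) / real N"
      using Suc.prems Np by (auto simp: divide_le_eq divide_right_mono)
    then have "integral {0..real (Suc m) / real N} f = integral {0..real m / real N} f
        + integral {real m / real N..real (Suc m) / real N} f"
      using integrable_on_subinterval[OF f]
      by (intro Henstock_Kurzweil_Integration.integral_combine[symmetric]) auto
    then show ?case using Suc by simp
  qed simp
  from this[of N] show ?thesis using Np by simp
qed

definition step_fun :: "nat \<Rightarrow> (nat \<Rightarrow> real) \<Rightarrow> real \<Rightarrow> real" where
  "step_fun N c x = (\<Sum>k<N. c k * indicator {real k / real N ..< real (Suc k) / real N} x)"

lemma step_fun_on_cell:
  assumes N: "N \<ge> 1" and k: "k < N" and x: "real k / real N < x" "x < real (Suc k) / real N"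
  shows "step_fun N c x = c k"
proof -
  have Np: "real N > 0" using N by simp
  have "x \<notin> {real j / real N ..< real (Suc j) / real N}" if "j \<noteq> k" for j
  proof
    assume "x \<in> {real j / real N ..< real (Suc j) / real N}"
    then have "real j / real N < real (Suc k) / real N" "real k / real N < real (Suc j) / real N"
      using x by auto
    then have "real j < real (Suc k)" "real k < real (Suc j)"
      using Np by (simp_all add: divide_less_cancel)
    then show False using that by linarith
  qed
  then have "step_fun N c x = (\<Sum>j<N. if j = k then c k else 0)"
    unfolding step_fun_def using x by (intro sum.cong) auto
  also have "\<dots> = c k" using k by simp
  finally show ?thesis .
qed

lemma step_fun_L2: "L2 (step_fun N c)"
proof -
  have m: "step_fun N c \<in> borel_measurable lebesgue01"
    unfolding step_fun_def
    by (intro borel_measurable_sum borel_measurable_times measurable_restrict_space1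
        borel_measurable_indicator) auto
  have "\<bar>step_fun N c x\<bar> \<le> (\<Sum>k<N. \<bar>c k\<bar>)" for x
    unfolding step_fun_def
    by (rule order_trans[OF sum_abs]) (intro sum_mono, simp add: abs_mult indicator_def)
  then have "(step_fun N c x)\<^sup>2 \<le> (\<Sum>k<N. \<bar>c k\<bar>)\<^sup>2" for x
    by (metis abs_le_square_iff abs_of_nonneg abs_ge_zero order_trans)
  then have "integrable lebesgue01 (\<lambda>x. (step_fun N c x)\<^sup>2)"
    using m by (intro finite_measure.integrable_const_bound[where B="(\<Sum>k<N. \<bar>c k\<bar>)\<^sup>2"]
        finite_measure_lebesgue_on AE_I2) auto
  with m show ?thesis by (simp add: L2_def)
qed

lemma spline_space_diff:
  assumes a: "a \<in> spline_space N" and b: "b \<in> spline_space N"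
  shows "(\<lambda>x. a x - b x) \<in> spline_space N"
proof -
  obtain a' where a': "continuous_on {0..1} a'"
    "\<forall>x\<in>{0..1}. (a has_real_derivative a' x) (at x within {0..1})"
    using a unfolding spline_space_def by blast
  obtain b' where b': "continuous_on {0..1} b'"
    "\<forall>x\<in>{0..1}. (b has_real_derivative b' x) (at x within {0..1})"
    using b unfolding spline_space_def by blast
  have "\<exists>p q r. \<forall>x\<in>{real k / real N..real (Suc k) / real N}. a x - b x = p + q * x + r * x\<^sup>2"
    if k: "k < N" for k
  proof -
    obtain p1 q1 r1 where
      "\<forall>x\<in>{real k / real N..real (Suc k) / real N}. a x = p1 + q1 * x + r1 * x\<^sup>2"
      using a k unfolding spline_space_def by blast
    moreover obtain p2 q2 r2 where
      "\<forall>x\<in>{real k / real N..real (Suc k) / real N}. b x = p2 + q2 * x + r2 * x\<^sup>2"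
      using b k unfolding spline_space_def by blast
    ultimately show ?thesis
      by (intro exI[of _ "p1 - p2"] exI[of _ "q1 - q2"] exI[of _ "r1 - r2"]) (auto simp: algebra_simps)
  qed
  moreover have "continuous_on {0..1} (\<lambda>x. a' x - b' x)"
    using a'(1) b'(1) by (intro continuous_intros)
  moreover have "\<forall>x\<in>{0..1}. ((\<lambda>x. a x - b x) has_real_derivative (a' x - b' x)) (at x within {0..1})"
    using a'(2) b'(2) by (auto intro: derivative_intros)
  ultimately show ?thesis using a b unfolding spline_space_def by auto
qed

lemma quadratic_piece_second_derivative:
  fixes y y' :: "real \<Rightarrow> real"
  assumes U: "open U" "U \<subseteq> {0..1}" and t: "t \<in> U"
    and y: "\<forall>s\<in>U. y s = p + q * s + r * s\<^sup>2"
    and y_deriv: "\<forall>s\<in>{0..1}. (y has_real_derivative y' s) (at s within {0..1})"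
  shows "(y' has_real_derivative 2 * r) (at t)"
proof -
  have "y' s = q + 2 * r * s" if s: "s \<in> U" for s
  proof -
    have "((\<lambda>s. p + q * s + r * s\<^sup>2) has_real_derivative q + 2 * r * s) (at s)"
      by (auto intro!: derivative_eq_intros)
    then have "(y has_real_derivative q + 2 * r * s) (at s)"
      by (rule has_field_derivative_transform_within_open[OF _ U(1) s]) (use y in auto)
    moreover have "s \<in> interior {0..1}"
      using s U interior_maximal by blast
    then have "(y has_real_derivative y' s) (at s)"
      using y_deriv U s at_within_interior by fastforce
    ultimately show ?thesis by (rule DERIV_unique[rotated])
  qed
  moreover have "((\<lambda>s. q + 2 * r * s) has_real_derivative 2 * r) (at t)"
    by (auto intro!: derivative_eq_intros)
  ultimately show ?thesis
    by (rule_tac has_field_derivative_transform_within_open[OF _ U(1) t]) auto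
qed

lemma spline_space_imp_H2_0:
  assumes N: "N \<ge> 1" and y: "y \<in> spline_space N"
  obtains g where "H2_0 y g"
proof -
  obtain y' where y01: "y 0 = 0" "y 1 = 0" and y'_cont: "continuous_on {0..1} y'"
    and y_deriv: "\<forall>x\<in>{0..1}. (y has_real_derivative y' x) (at x within {0..1})"
    and "\<forall>k<N. \<exists>p q r. \<forall>x\<in>{real k / real N..real (Suc k) / real N}. y x = p + q * x + r * x\<^sup>2"
    using y unfolding spline_space_def by blast
  then obtain p q r where pqr:
    "\<forall>k<N. \<forall>x\<in>{real k / real N..real (Suc k) / real N}. y x = p k + q k * x + r k * x\<^sup>2"
    by metis
  have "(y' has_real_derivative step_fun N (\<lambda>k. 2 * r k) t) (at t)"
    if t: "t \<in> {0<..<1} - mesh_nodes N" for t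
  proof -
    obtain k where k: "k < N" "real k / real N < t" "t < real (Suc k) / real N"
      using mesh_cell_open[OF N, of t] t by auto
    have "real (Suc k) / real N \<le> 1"
      using k(1) N by (simp add: divide_le_eq)
    moreover have "0 \<le> real k / real N" by simp
    ultimately have "{real k / real N<..<real (Suc k) / real N} \<subseteq> {0..1}"
      unfolding subset_iff greaterThanLessThan_iff atLeastAtMost_iff by (meson less_imp_le order_trans)
    then have "(y' has_real_derivative 2 * r k) (at t)"
      using k pqr y_deriv by (intro quadratic_piece_second_derivative) auto
    then show ?thesis using step_fun_on_cell[OF N k] by simp
  qed
  then have "H2_0 y (step_fun N (\<lambda>k. 2 * r k))"
    using y01 y'_cont y_deriv
    by (intro H2_0_piecewise_C2I[OF step_fun_L2 _ _ finite_mesh_nodes]) auto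
  then show ?thesis by (rule that)
qed

lemma discrete_sol_orthogonal:
  assumes sol: "discrete_sol N \<rho> u y" and u: "L2 u" and gy: "H2_0 y gy"
    and w: "w \<in> spline_space N" "H2_0 w gw"
  shows "integral\<^sup>L lebesgue01 (\<lambda>x. (y x - u x) * w x)
    = - \<rho> * integral\<^sup>L lebesgue01 (\<lambda>x. gy x * gw x)"
proof -
  have "integral\<^sup>L lebesgue01 (\<lambda>x. y x * w x) + \<rho> * integral\<^sup>L lebesgue01 (\<lambda>x. gy x * gw x)
      = integral\<^sup>L lebesgue01 (\<lambda>x. u x * w x)"
    using sol w gy unfolding discrete_sol_def by blast
  then show ?thesis
    using integral_L2_mult_diff[OF H2_0_imp_L2[OF gy] u H2_0_imp_L2[OF w(2)]] by simp
qed

text \<open>By Galerkin orthogonality, \<open>y\<close> minimises \<open>\<integral>(z - u)\<^sup>2 + \<rho> \<integral>(z'')\<^sup>2\<close> over the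
  splines \<open>z\<close>.\<close>
lemma discrete_sol_best_approximation:
  assumes N: "N \<ge> 1" and u: "L2 u" and sol: "discrete_sol N \<rho> u y" and \<rho>: "0 \<le> \<rho>"
    and z: "z \<in> spline_space N" "H2_0 z gz"
  shows "integral\<^sup>L lebesgue01 (\<lambda>x. (y x - u x)\<^sup>2)
    \<le> integral\<^sup>L lebesgue01 (\<lambda>x. (z x - u x)\<^sup>2) + \<rho> * integral\<^sup>L lebesgue01 (\<lambda>x. (gz x)\<^sup>2)"
proof -
  have y: "y \<in> spline_space N" using sol by (simp add: discrete_sol_def)
  obtain gy where gy: "H2_0 y gy" using spline_space_imp_H2_0[OF N y] .
  define w where "w x = z x - y x" for x
  define gw where "gw x = gz x - gy x" for x
  have w: "w \<in> spline_space N" "H2_0 w gw"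
    unfolding w_def gw_def using spline_space_diff[OF z(1) y] H2_0_diff[OF z(2) gy] by auto
  have L2: "L2 w" "L2 gy" "L2 gw" "L2 (\<lambda>x. y x - u x)"
    using gy w H2_0_imp_L2 H2_0_imp_L2_second_deriv L2_diff[OF _ u] by blast+
  have "integral\<^sup>L lebesgue01 (\<lambda>x. (z x - u x)\<^sup>2)
      = integral\<^sup>L lebesgue01 (\<lambda>x. ((y x - u x) + w x)\<^sup>2)"
    by (simp add: w_def)
  also have "\<dots> = integral\<^sup>L lebesgue01 (\<lambda>x. (y x - u x)\<^sup>2)
      - 2 * \<rho> * integral\<^sup>L lebesgue01 (\<lambda>x. gy x * gw x) + integral\<^sup>L lebesgue01 (\<lambda>x. (w x)\<^sup>2)"
    using integral_square_add[OF L2(4,1)] discrete_sol_orthogonal[OF sol u gy w] by simp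
  finally have zu: "integral\<^sup>L lebesgue01 (\<lambda>x. (z x - u x)\<^sup>2) = \<dots>" .
  have "integral\<^sup>L lebesgue01 (\<lambda>x. (gz x)\<^sup>2) = integral\<^sup>L lebesgue01 (\<lambda>x. (gy x + gw x)\<^sup>2)"
    by (simp add: gw_def)
  also have "\<dots> = integral\<^sup>L lebesgue01 (\<lambda>x. (gy x)\<^sup>2)
      + 2 * integral\<^sup>L lebesgue01 (\<lambda>x. gy x * gw x) + integral\<^sup>L lebesgue01 (\<lambda>x. (gw x)\<^sup>2)"
    by (rule integral_square_add[OF L2(2,3)])
  finally have gz: "integral\<^sup>L lebesgue01 (\<lambda>x. (gz x)\<^sup>2) = \<dots>" .
  have "0 \<le> integral\<^sup>L lebesgue01 (\<lambda>x. (f x)\<^sup>2)" for f :: "real \<Rightarrow> real"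
    by (simp add: integral_nonneg_AE)
  then have "0 \<le> integral\<^sup>L lebesgue01 (\<lambda>x. (w x)\<^sup>2) + \<rho> * integral\<^sup>L lebesgue01 (\<lambda>x. (gy x)\<^sup>2)
      + \<rho> * integral\<^sup>L lebesgue01 (\<lambda>x. (gw x)\<^sup>2)"
    using \<rho> by (intro add_nonneg_nonneg mult_nonneg_nonneg) auto
  then show ?thesis
    unfolding zu gz by (simp add: algebra_simps)
qed

section \<open>Quasi-interpolation by quadratic splines\<close>

lemma sum_pred_le:
  fixes f :: "nat \<Rightarrow> real"
  assumes N: "N \<ge> 1" and nonneg: "\<And>k. k < N \<Longrightarrow> 0 \<le> f k"
  shows "(\<Sum>k<N. f (k - 1)) \<le> 2 * (\<Sum>k<N. f k)"
proof -
  obtain n where n: "N = Suc n" using N by (cases N) auto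
  have "(\<Sum>k<Suc n. f (k - 1)) = f 0 + (\<Sum>k<n. f k)"
    by (subst sum.lessThan_Suc_shift) simp
  also have "(\<Sum>k<n. f k) \<le> (\<Sum>k<Suc n. f k)"
    using nonneg n by simp
  also have "f 0 \<le> (\<Sum>k<Suc n. f k)"
    using nonneg n by (intro member_le_sum) auto
  finally show ?thesis using n by simp
qed

lemma sum_succ_le:
  fixes f :: "nat \<Rightarrow> real"
  assumes N: "N \<ge> 1" and nonneg: "\<And>k. k < N \<Longrightarrow> 0 \<le> f k"
  shows "(\<Sum>k<N. f (min (Suc k) (N - 1))) \<le> 2 * (\<Sum>k<N. f k)"
proof -
  obtain n where n: "N = Suc n" using N by (cases N) auto
  have "(\<Sum>k<Suc n. f (min (Suc k) n)) = (\<Sum>k<n. f (Suc k)) + f n"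
    by (simp add: min_absorb1 Suc_leI)
  also have "(\<Sum>k<n. f (Suc k)) \<le> (\<Sum>k<Suc n. f k)"
    using nonneg n by (subst sum.lessThan_Suc_shift) simp
  also have "f n \<le> (\<Sum>k<Suc n. f k)"
    using nonneg n by (intro member_le_sum) auto
  finally show ?thesis using n by simp
qed

locale quasi_interpolation =
  fixes N :: nat and g v' :: "real \<Rightarrow> real"
  assumes N: "N \<ge> 1" and L2_g: "L2 g"
    and v'_eq: "\<forall>x\<in>{0..1}. v' x = v' 0 + integral {0..x} g"
    and integral_v': "integral {0..1} v' = 0"
begin

definition node :: "nat \<Rightarrow> real" where
  "node k = real k / real N"

definition v :: "real \<Rightarrow> real" where
  "v x = integral {0..x} v'"

text \<open>\<open>slope k\<close> is the mean of \<open>v'\<close> over the cell \<open>[node k, node (k + 1)]\<close>. The index is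
  clamped to the last cell, and \<open>k - 1\<close> is truncated at \<open>0\<close>, so that the averaged slopes
  \<open>node_slope\<close> at the two boundary nodes are one-sided.\<close>
definition slope :: "nat \<Rightarrow> real" where
  "slope k = (v (node (Suc (min k (N - 1)))) - v (node (min k (N - 1)))) * real N"

definition node_slope :: "nat \<Rightarrow> real" where
  "node_slope k = (slope (k - 1) + slope k) / 2"

definition cell_variation :: "nat \<Rightarrow> real" where
  "cell_variation k = integral {node k..node (Suc k)} (\<lambda>t. \<bar>g t\<bar>)"

definition cell_energy :: "nat \<Rightarrow> real" where
  "cell_energy k = integral {node k..node (Suc k)} (\<lambda>t. (g t)\<^sup>2)"

definition patch_variation :: "nat \<Rightarrow> real" where
  "patch_variation k = cell_variation (k - 1) + cell_variation k + cell_variation (min (Suc k) (N - 1))"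

definition patch_energy :: "nat \<Rightarrow> real" where
  "patch_energy k = cell_energy (k - 1) + cell_energy k + cell_energy (min (Suc k) (N - 1))"

lemma N_pos: "real N > 0"
  using N by simp

lemma node_0 [simp]: "node 0 = 0"
  by (simp add: node_def)

lemma node_N [simp]: "node N = 1"
  using N_pos by (simp add: node_def)

lemma node_nonneg: "0 \<le> node k"
  by (simp add: node_def)

lemma node_le_1: "k \<le> N \<Longrightarrow> node k \<le> 1"
  using N_pos by (simp add: node_def divide_le_eq)

lemma node_Suc: "node (Suc k) = node k + 1 / real N"
  by (simp add: node_def add_divide_distrib)

lemma node_le_Suc: "node k \<le> node (Suc k)"
  using N_pos by (simp add: node_Suc)

lemma node_in_cell: "node k \<in> {node k..node (Suc k)}" "node (Suc k) \<in> {node k..node (Suc k)}"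
  using node_le_Suc[of k] by auto

lemma cell_subset: "k < N \<Longrightarrow> {node k..node (Suc k)} \<subseteq> {0..1}"
  using node_nonneg[of k] node_le_1[of "Suc k"] by auto

lemma integrable_g: "0 \<le> a \<Longrightarrow> b \<le> 1 \<Longrightarrow> g integrable_on {a..b}"
  by (rule L2_integrable_on[OF L2_g])

lemma integrable_abs_g: "0 \<le> a \<Longrightarrow> b \<le> 1 \<Longrightarrow> (\<lambda>t. \<bar>g t\<bar>) integrable_on {a..b}"
  using integrable_lebesgue01_subinterval(1)[OF integrable_abs[OF integrable_L2[OF L2_g]]] by blast

lemma integrable_square_g: "0 \<le> a \<Longrightarrow> b \<le> 1 \<Longrightarrow> (\<lambda>t. (g t)\<^sup>2) integrable_on {a..b}"
  using integrable_lebesgue01_subinterval(1)[OF L2_imp_integrable_square[OF L2_g]] by blast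

lemma continuous_v': "continuous_on {0..1} v'"
  by (rule continuous_on_indefinite_integral_L2[OF L2_g v'_eq])

lemma integrable_v': "0 \<le> a \<Longrightarrow> b \<le> 1 \<Longrightarrow> v' integrable_on {a..b}"
  by (rule integrable_continuous_real, rule continuous_on_subset[OF continuous_v']) auto

lemma v'_diff:
  assumes "0 \<le> s" "s \<le> t" "t \<le> 1"
  shows "v' t - v' s = integral {s..t} g"
proof -
  have "t \<in> {0..1}" "s \<in> {0..1}"
    using assms by auto
  then have "v' t = v' 0 + integral {0..t} g" "v' s = v' 0 + integral {0..s} g"
    using v'_eq by blast+
  moreover have "integral {0..t} g = integral {0..s} g + integral {s..t} g"
    using assms integrable_g[of 0 t]
    by (intro Henstock_Kurzweil_Integration.integral_combine[symmetric]) auto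
  ultimately show ?thesis by linarith
qed

lemma abs_v'_diff_le:
  assumes ab: "0 \<le> a" "b \<le> 1" and st: "s \<in> {a..b}" "t \<in> {a..b}"
  shows "\<bar>v' t - v' s\<bar> \<le> integral {a..b} (\<lambda>x. \<bar>g x\<bar>)"
proof -
  have *: "\<bar>v' t' - v' s'\<bar> \<le> integral {a..b} (\<lambda>x. \<bar>g x\<bar>)"
    if st': "a \<le> s'" "s' \<le> t'" "t' \<le> b" for s' t'
  proof -
    have "\<bar>v' t' - v' s'\<bar> = norm (integral {s'..t'} g)"
      using v'_diff[of s' t'] st' ab by simp
    also have "\<dots> \<le> integral {s'..t'} (\<lambda>x. \<bar>g x\<bar>)"
      by (rule integral_norm_bound_integral) (use integrable_g integrable_abs_g st' ab in auto)
    also have "\<dots> \<le> integral {a..b} (\<lambda>x. \<bar>g x\<bar>)"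
      by (rule integral_subset_le) (use integrable_abs_g st' ab in auto)
    finally show ?thesis .
  qed
  show ?thesis
    using *[of s t] *[of t s] st by (cases "s \<le> t") (auto simp: abs_minus_commute)
qed

lemma v_has_derivative: "x \<in> {0..1} \<Longrightarrow> (v has_real_derivative v' x) (at x within {0..1})"
  using integral_has_real_derivative[OF continuous_v'] by (simp add: v_def[abs_def])

lemma slope_mean_value:
  assumes k: "k < N"
  obtains \<xi> where "\<xi> \<in> {node k..node (Suc k)}" "slope k = v' \<xi>"
proof -
  have "\<exists>\<xi>\<in>{node k..node (Suc k)}. v (node (Suc k)) - v (node k) = v' \<xi> * (node (Suc k) - node k)"
  proof (rule mvt_very_simple[OF node_le_Suc])
    fix x assume "node k \<le> x" "x \<le> node (Suc k)"
    then have "x \<in> {0..1}" using cell_subset[OF k] by auto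
    then have "(v has_real_derivative v' x) (at x within {node k..node (Suc k)})"
      using v_has_derivative cell_subset[OF k] DERIV_subset by blast
    then show "(v has_derivative (*) (v' x)) (at x within {node k..node (Suc k)})"
      by (simp add: has_field_derivative_def mult.commute)
  qed
  moreover have "min k (N - 1) = k" using k by simp
  ultimately show ?thesis
    using that N_pos by (auto simp: slope_def node_Suc)
qed

lemma cell_variation_nonneg: "k < N \<Longrightarrow> 0 \<le> cell_variation k"
  unfolding cell_variation_def
  by (rule integral_nonneg) (use integrable_abs_g cell_subset node_nonneg node_le_1 in auto)

lemma cell_energy_nonneg: "k < N \<Longrightarrow> 0 \<le> cell_energy k"
  unfolding cell_energy_def
  by (rule integral_nonneg) (use integrable_square_g cell_subset node_nonneg node_le_1 in auto)

lemma patch_variation_parts_nonneg: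
  "k < N \<Longrightarrow> 0 \<le> cell_variation (k - 1) \<and> 0 \<le> cell_variation k
     \<and> 0 \<le> cell_variation (min (Suc k) (N - 1))"
  using cell_variation_nonneg by auto

lemma patch_variation_nonneg: "k < N \<Longrightarrow> 0 \<le> patch_variation k"
  using patch_variation_parts_nonneg unfolding patch_variation_def by fastforce

lemma abs_v'_diff_le_cell_variation:
  assumes "k < N" "s \<in> {node k..node (Suc k)}" "t \<in> {node k..node (Suc k)}"
  shows "\<bar>v' t - v' s\<bar> \<le> cell_variation k"
  unfolding cell_variation_def
  using assms node_le_1[of "Suc k"] by (intro abs_v'_diff_le[OF node_nonneg]) auto

lemma abs_v'_minus_slope:
  assumes k: "k < N" and t: "t \<in> {node k..node (Suc k)}"
  shows "\<bar>v' t - slope k\<bar> \<le> cell_variation k"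
  by (metis slope_mean_value[OF k] abs_v'_diff_le_cell_variation[OF k _ t])

lemma abs_v'_minus_slope_pred:
  assumes k: "k < N" and t: "t \<in> {node k..node (Suc k)}"
  shows "\<bar>v' t - slope (k - 1)\<bar> \<le> cell_variation (k - 1) + cell_variation k"
proof (cases k)
  case 0
  then show ?thesis using abs_v'_minus_slope[OF k t] cell_variation_nonneg[OF k] by simp
next
  case (Suc j)
  with k obtain \<xi> where \<xi>: "\<xi> \<in> {node j..node k}" "slope j = v' \<xi>"
    using slope_mean_value[of j] by auto
  have "\<bar>v' t - v' (node k)\<bar> \<le> cell_variation k"
    by (rule abs_v'_diff_le_cell_variation[OF k node_in_cell(1) t])
  moreover have "\<bar>v' (node k) - v' \<xi>\<bar> \<le> cell_variation j"
    using abs_v'_diff_le_cell_variation[of j \<xi> "node k"] \<xi> node_in_cell(2)[of j] Suc k by simp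
  ultimately show ?thesis
    using \<xi> Suc by (simp add: abs_le_iff)
qed

lemma abs_v'_minus_slope_succ:
  assumes k: "k < N" and t: "t \<in> {node k..node (Suc k)}"
  shows "\<bar>v' t - slope (Suc k)\<bar> \<le> cell_variation k + cell_variation (min (Suc k) (N - 1))"
proof (cases "Suc k < N")
  case True
  then obtain \<xi> where \<xi>: "\<xi> \<in> {node (Suc k)..node (Suc (Suc k))}" "slope (Suc k) = v' \<xi>"
    using slope_mean_value by blast
  have "\<bar>v' t - v' (node (Suc k))\<bar> \<le> cell_variation k"
    by (rule abs_v'_diff_le_cell_variation[OF k node_in_cell(2) t])
  moreover have "\<bar>v' (node (Suc k)) - v' \<xi>\<bar> \<le> cell_variation (Suc k)"
    by (rule abs_v'_diff_le_cell_variation[OF True \<xi>(1) node_in_cell(1)])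
  ultimately show ?thesis
    using \<xi> True by (simp add: abs_le_iff)
next
  case False
  then have m: "min (Suc k) (N - 1) = k" "min k (N - 1) = k"
    using k by auto
  then have "slope (Suc k) = slope k"
    by (simp only: slope_def)
  then show ?thesis
    using abs_v'_minus_slope[OF k t] cell_variation_nonneg[OF k] m(1) by simp
qed

lemma abs_v'_minus_node_slope:
  assumes k: "k < N" and t: "t \<in> {node k..node (Suc k)}"
  shows "\<bar>v' t - node_slope k\<bar> \<le> patch_variation k"
  using abs_v'_minus_slope_pred[OF k t] abs_v'_minus_slope[OF k t] patch_variation_parts_nonneg[OF k]
  unfolding node_slope_def patch_variation_def abs_le_iff by argo

lemma abs_v'_minus_node_slope_succ:
  assumes k: "k < N" and t: "t \<in> {node k..node (Suc k)}"
  shows "\<bar>v' t - node_slope (Suc k)\<bar> \<le> patch_variation k"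
  using abs_v'_minus_slope[OF k t] abs_v'_minus_slope_succ[OF k t] patch_variation_parts_nonneg[OF k]
  unfolding node_slope_def patch_variation_def abs_le_iff diff_Suc_1 by argo

lemma abs_slope_diff_le:
  assumes k: "k < N"
  shows "\<bar>slope k - slope (k - 1)\<bar> \<le> 2 * patch_variation k"
  using abs_v'_minus_slope_pred[OF k node_in_cell(1)] abs_v'_minus_slope[OF k node_in_cell(1)]
    patch_variation_parts_nonneg[OF k]
  unfolding patch_variation_def abs_le_iff by argo

lemma abs_node_slope_diff_le:
  assumes k: "k < N"
  shows "\<bar>node_slope (Suc k) - node_slope k\<bar> \<le> 2 * patch_variation k"
  using abs_v'_minus_node_slope[OF k node_in_cell(1)] abs_v'_minus_node_slope_succ[OF k node_in_cell(1)]
  unfolding abs_le_iff by argo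

definition hat :: "nat \<Rightarrow> real \<Rightarrow> real" where
  "hat k x = max 0 (1 - \<bar>x * real N - real k\<bar>)"

definition z' :: "real \<Rightarrow> real" where
  "z' x = (\<Sum>k\<le>N. node_slope k * hat k x)"

definition z :: "real \<Rightarrow> real" where
  "z x = integral {0..x} z'"

definition z'' :: "real \<Rightarrow> real" where
  "z'' = step_fun N (\<lambda>k. (node_slope (Suc k) - node_slope k) * real N)"

definition cell_quadratic :: "nat \<Rightarrow> real \<Rightarrow> real" where
  "cell_quadratic k s = node_slope k * (s - node k)
     + (node_slope (Suc k) - node_slope k) * real N / 2 * (s - node k)\<^sup>2"

text \<open>On each cell \<open>\<integral>z' = (node_slope k + node_slope (k + 1)) / (2 N)\<close> while
  \<open>\<integral>v' = slope k / N\<close>; the differences telescope to the correction term below, which vanishes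
  at the last node because the slopes are clamped there. This is what makes \<open>z 1 = 0\<close>.\<close>
definition node_value :: "nat \<Rightarrow> real" where
  "node_value k = v (node k) + (slope k - slope (k - 1)) / (4 * real N)"

lemma cell_coordinate:
  assumes "t \<in> {node k..node (Suc k)}"
  shows "real k \<le> t * real N" "t * real N \<le> real k + 1"
    "(t - node k) * real N = t * real N - real k"
  using assms N_pos by (auto simp: node_def field_simps)

lemma hat_on_cell:
  assumes t: "t \<in> {node k..node (Suc k)}"
  shows "hat k t = 1 - (t - node k) * real N" "hat (Suc k) t = (t - node k) * real N"
    "j \<noteq> k \<Longrightarrow> j \<noteq> Suc k \<Longrightarrow> hat j t = 0"
proof -
  note u = cell_coordinate[OF t]
  show "hat k t = 1 - (t - node k) * real N" "hat (Suc k) t = (t - node k) * real N"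
    unfolding hat_def u(3) using u(1,2) by auto
  assume "j \<noteq> k" "j \<noteq> Suc k"
  then have "real j \<le> real k - 1 \<or> real j \<ge> real k + 2"
    by linarith
  then show "hat j t = 0"
    unfolding hat_def using u(1,2) by auto
qed

lemma z'_on_cell:
  assumes k: "k < N" and t: "t \<in> {node k..node (Suc k)}"
  shows "z' t = node_slope k + (node_slope (Suc k) - node_slope k) * ((t - node k) * real N)"
proof -
  have "z' t = (\<Sum>j\<in>{k, Suc k}. node_slope j * hat j t)"
    unfolding z'_def by (rule sum.mono_neutral_right) (use k hat_on_cell(3)[OF t] in auto)
  also have "\<dots> = node_slope k * hat k t + node_slope (Suc k) * hat (Suc k) t"
    by simp
  also have "\<dots> = node_slope k + (node_slope (Suc k) - node_slope k) * ((t - node k) * real N)"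
    unfolding hat_on_cell(1,2)[OF t] by (simp add: algebra_simps)
  finally show ?thesis .
qed

lemma continuous_z': "continuous_on A z'"
  unfolding z'_def hat_def by (intro continuous_intros)

lemma integrable_z': "z' integrable_on {a..b}"
  by (rule integrable_continuous_real[OF continuous_z'])

lemma abs_v'_minus_z'_le:
  assumes k: "k < N" and t: "t \<in> {node k..node (Suc k)}"
  shows "\<bar>v' t - z' t\<bar> \<le> patch_variation k"
proof -
  define \<theta> where "\<theta> = (t - node k) * real N"
  have \<theta>: "0 \<le> \<theta>" "\<theta> \<le> 1"
    using cell_coordinate[OF t] unfolding \<theta>_def by linarith+
  have "\<bar>v' t - z' t\<bar> = \<bar>(1 - \<theta>) * (v' t - node_slope k) + \<theta> * (v' t - node_slope (Suc k))\<bar>"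
    unfolding z'_on_cell[OF k t] \<theta>_def[symmetric] by (simp add: algebra_simps)
  also have "\<dots> \<le> (1 - \<theta>) * \<bar>v' t - node_slope k\<bar> + \<theta> * \<bar>v' t - node_slope (Suc k)\<bar>"
    by (rule order_trans[OF abs_triangle_ineq]) (use \<theta> in \<open>simp add: abs_mult\<close>)
  also have "\<dots> \<le> (1 - \<theta>) * patch_variation k + \<theta> * patch_variation k"
    using \<theta> abs_v'_minus_node_slope[OF k t] abs_v'_minus_node_slope_succ[OF k t]
    by (intro add_mono mult_left_mono) auto
  finally show ?thesis by (simp add: algebra_simps)
qed

lemma cell_quadratic_has_derivative:
  "(cell_quadratic k has_real_derivative
      node_slope k + (node_slope (Suc k) - node_slope k) * ((s - node k) * real N)) (at s)"
  unfolding cell_quadratic_def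
  by (auto intro!: derivative_eq_intros simp: field_simps)

lemma integral_z'_on_cell:
  assumes k: "k < N" and t: "t \<in> {node k..node (Suc k)}"
  shows "integral {node k..t} z' = cell_quadratic k t"
proof -
  have "(z' has_integral cell_quadratic k t - cell_quadratic k (node k)) {node k..t}"
  proof (rule fundamental_theorem_of_calculus)
    fix s assume "s \<in> {node k..t}"
    then have "s \<in> {node k..node (Suc k)}" using t by auto
    then show "(cell_quadratic k has_vector_derivative z' s) (at s within {node k..t})"
      using cell_quadratic_has_derivative[of k s] z'_on_cell[OF k]
      by (simp add: has_real_derivative_iff_has_vector_derivative has_vector_derivative_at_within)
  qed (use t in simp)
  then show ?thesis by (simp add: integral_unique cell_quadratic_def)
qed

lemma cell_quadratic_right_end:
  "cell_quadratic k (node (Suc k)) = (node_slope k + node_slope (Suc k)) / (2 * real N)"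
  unfolding cell_quadratic_def node_Suc using N_pos by (simp add: field_simps power2_eq_square)

lemma node_value_Suc:
  assumes k: "k < N"
  shows "node_value (Suc k) = node_value k + (node_slope k + node_slope (Suc k)) / (2 * real N)"
proof -
  have v_Suc: "v (node (Suc k)) = v (node k) + slope k / real N"
    using k N_pos by (simp add: slope_def field_simps)
  show ?thesis
    unfolding node_value_def node_slope_def v_Suc using N_pos by (simp add: field_simps)
qed

lemma z_node: "k \<le> N \<Longrightarrow> z (node k) = node_value k"
proof (induction k)
  case 0
  then show ?case by (simp add: z_def node_value_def v_def)
next
  case (Suc k)
  then have k: "k < N" by simp
  have "z (node (Suc k)) = integral {0..node k} z' + integral {node k..node (Suc k)} z'"
    unfolding z_def
    by (rule Henstock_Kurzweil_Integration.integral_combine[OF node_nonneg node_le_Suc integrable_z',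
          symmetric])
  also have "\<dots> = node_value k + cell_quadratic k (node (Suc k))"
    using Suc k integral_z'_on_cell[OF k node_in_cell(2)] by (simp add: z_def)
  finally show ?case
    unfolding cell_quadratic_right_end node_value_Suc[OF k] .
qed

lemma z_0: "z 0 = 0"
  by (simp add: z_def)

lemma z_1: "z 1 = 0"
proof -
  have "slope N = slope (N - 1)"
    by (simp add: slope_def)
  then have "z 1 = v 1"
    using z_node[of N] by (simp add: node_value_def)
  then show ?thesis
    using integral_v' by (simp add: v_def)
qed

lemma z_on_cell:
  assumes k: "k < N" and t: "t \<in> {node k..node (Suc k)}"
  shows "z t = node_value k + cell_quadratic k t"
proof -
  have "z t = integral {0..node k} z' + integral {node k..t} z'"
    unfolding z_def
    by (rule Henstock_Kurzweil_Integration.integral_combine[OF node_nonneg _ integrable_z', symmetric])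
       (use t in auto)
  then show ?thesis
    using z_node[of k] k integral_z'_on_cell[OF k t] by (simp add: z_def)
qed

lemma v_on_cell:
  assumes k: "k < N" and t: "t \<in> {node k..node (Suc k)}"
  shows "v t = v (node k) + integral {node k..t} v'"
  unfolding v_def
  by (rule Henstock_Kurzweil_Integration.integral_combine[OF node_nonneg _ integrable_v', symmetric])
     (use t cell_subset[OF k] in auto)

lemma abs_z_minus_v_le:
  assumes k: "k < N" and t: "t \<in> {node k..node (Suc k)}"
  shows "\<bar>z t - v t\<bar> \<le> 2 * patch_variation k / real N"
proof -
  have t1: "t \<le> 1" using t cell_subset[OF k] by auto
  have "z t - v t = (slope k - slope (k - 1)) / (4 * real N) + integral {node k..t} (\<lambda>s. z' s - v' s)"
    unfolding z_on_cell[OF k t] v_on_cell[OF k t] integral_z'_on_cell[OF k t, symmetric]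
    using integral_diff[OF integrable_z' integrable_v'[OF node_nonneg t1]]
    by (simp add: node_value_def)
  moreover have "\<bar>(slope k - slope (k - 1)) / (4 * real N)\<bar> \<le> patch_variation k / (2 * real N)"
    using abs_slope_diff_le[OF k] N_pos by (simp add: abs_divide field_simps)
  moreover have "\<bar>integral {node k..t} (\<lambda>s. z' s - v' s)\<bar> \<le> patch_variation k / real N"
  proof -
    have "norm (integral {node k..t} (\<lambda>s. z' s - v' s)) \<le> integral {node k..t} (\<lambda>s. patch_variation k)"
    proof (rule integral_norm_bound_integral)
      show "(\<lambda>s. z' s - v' s) integrable_on {node k..t}"
        by (rule integrable_diff[OF integrable_z' integrable_v'[OF node_nonneg t1]])
      fix s assume "s \<in> {node k..t}"
      then have "s \<in> {node k..node (Suc k)}" using t by auto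
      then show "norm (z' s - v' s) \<le> patch_variation k"
        using abs_v'_minus_z'_le[OF k] by (simp add: abs_minus_commute)
    qed (rule integrable_const_ivl)
    also have "\<dots> = (t - node k) * patch_variation k" using t by simp
    also have "\<dots> \<le> (1 / real N) * patch_variation k"
      using t patch_variation_nonneg[OF k] unfolding node_Suc by (intro mult_right_mono) auto
    finally show ?thesis by simp
  qed
  ultimately have "\<bar>z t - v t\<bar> \<le> patch_variation k / (2 * real N) + patch_variation k / real N"
    by linarith
  also have "\<dots> \<le> 2 * patch_variation k / real N"
    using patch_variation_nonneg[OF k] N_pos by (simp add: field_simps)
  finally show ?thesis .
qed

lemma integral_square_g_eq_sum: "integral {0..1} (\<lambda>t. (g t)\<^sup>2) = (\<Sum>k<N. cell_energy k)"
  unfolding cell_energy_def node_def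
  by (rule integral_sum_mesh_cells[OF N integrable_square_g]) auto

lemma cell_variation_square_le: "k < N \<Longrightarrow> (cell_variation k)\<^sup>2 \<le> cell_energy k / real N"
  using integral_abs_square_le[OF node_le_Suc integrable_abs_g integrable_square_g, of k]
    node_nonneg[of k] node_le_1[of "Suc k"]
  by (simp add: cell_variation_def cell_energy_def node_Suc)

lemma patch_variation_square_le: "k < N \<Longrightarrow> (patch_variation k)\<^sup>2 \<le> 3 * patch_energy k / real N"
proof -
  assume k: "k < N"
  have "(patch_variation k)\<^sup>2 \<le> 3 * ((cell_variation (k - 1))\<^sup>2 + (cell_variation k)\<^sup>2
      + (cell_variation (min (Suc k) (N - 1)))\<^sup>2)"
    unfolding patch_variation_def by (rule square_add3_le)
  also have "\<dots> \<le> 3 * (cell_energy (k - 1) / real N + cell_energy k / real N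
      + cell_energy (min (Suc k) (N - 1)) / real N)"
    using cell_variation_square_le k by (intro mult_left_mono add_mono) auto
  also have "\<dots> = 3 * patch_energy k / real N"
    by (simp add: patch_energy_def add_divide_distrib)
  finally show ?thesis .
qed

lemma sum_patch_energy_le: "(\<Sum>k<N. patch_energy k) \<le> 5 * integral {0..1} (\<lambda>t. (g t)\<^sup>2)"
proof -
  have "(\<Sum>k<N. patch_energy k) = (\<Sum>k<N. cell_energy (k - 1)) + (\<Sum>k<N. cell_energy k)
      + (\<Sum>k<N. cell_energy (min (Suc k) (N - 1)))"
    unfolding patch_energy_def by (simp add: sum.distrib)
  also have "\<dots> \<le> 2 * (\<Sum>k<N. cell_energy k) + (\<Sum>k<N. cell_energy k) + 2 * (\<Sum>k<N. cell_energy k)"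
    using sum_pred_le[OF N] sum_succ_le[OF N] cell_energy_nonneg by (intro add_mono) auto
  finally show ?thesis
    unfolding integral_square_g_eq_sum by simp
qed

lemma continuous_z: "continuous_on {0..1} z"
  unfolding z_def[abs_def] by (rule indefinite_integral_continuous_1[OF integrable_z'])

lemma continuous_v: "continuous_on {0..1} v"
  unfolding v_def[abs_def] by (rule indefinite_integral_continuous_1[OF integrable_v']) auto

lemma integral_square_z_minus_v_le:
  "integral {0..1} (\<lambda>t. (z t - v t)\<^sup>2) \<le> 60 * integral {0..1} (\<lambda>t. (g t)\<^sup>2) / real N ^ 4"
proof -
  let ?f = "\<lambda>t. (z t - v t)\<^sup>2"
  have f: "?f integrable_on {0..1}"
    by (intro integrable_continuous_real continuous_intros continuous_z continuous_v)
  have "integral {0..1} ?f = (\<Sum>k<N. integral {node k..node (Suc k)} ?f)"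
    unfolding node_def by (rule integral_sum_mesh_cells[OF N f])
  also have "\<dots> \<le> (\<Sum>k<N. 12 * patch_energy k / real N ^ 4)"
  proof (rule sum_mono)
    fix k assume "k \<in> {..<N}"
    then have k: "k < N" by simp
    have "integral {node k..node (Suc k)} ?f
        \<le> integral {node k..node (Suc k)} (\<lambda>t. (2 * patch_variation k / real N)\<^sup>2)"
    proof (rule integral_le)
      show "?f integrable_on {node k..node (Suc k)}"
        by (rule integrable_on_subinterval[OF f cell_subset[OF k]])
      fix t assume "t \<in> {node k..node (Suc k)}"
      then show "?f t \<le> (2 * patch_variation k / real N)\<^sup>2"
          by (rule square_le_of_abs_le[OF abs_z_minus_v_le[OF k]])
    qed (rule integrable_const_ivl)
    also have "\<dots> = 4 * (patch_variation k)\<^sup>2 / real N ^ 3"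
      using node_le_Suc[of k] N_pos by (simp add: node_Suc power2_eq_square power3_eq_cube)
    also have "\<dots> \<le> 4 * (3 * patch_energy k / real N) / real N ^ 3"
      using patch_variation_square_le[OF k] N_pos by (intro divide_right_mono mult_left_mono) auto
    also have "\<dots> = 12 * patch_energy k / real N ^ 4"
      using N_pos by (simp add: field_simps power3_eq_cube power4_eq_xxxx)
    finally show "integral {node k..node (Suc k)} ?f \<le> 12 * patch_energy k / real N ^ 4" .
  qed
  also have "\<dots> = 12 * (\<Sum>k<N. patch_energy k) / real N ^ 4"
    by (simp add: sum_divide_distrib[symmetric] sum_distrib_left[symmetric])
  also have "\<dots> \<le> 60 * integral {0..1} (\<lambda>t. (g t)\<^sup>2) / real N ^ 4"
    using sum_patch_energy_le N_pos by (intro divide_right_mono) auto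
  finally show ?thesis .
qed

lemma z''_on_cell:
  "k < N \<Longrightarrow> t \<in> {node k<..<node (Suc k)} \<Longrightarrow> z'' t = (node_slope (Suc k) - node_slope k) * real N"
  unfolding z''_def node_def by (rule step_fun_on_cell[OF N]) auto

lemma integral_square_z''_le: "integral {0..1} (\<lambda>t. (z'' t)\<^sup>2) \<le> 60 * integral {0..1} (\<lambda>t. (g t)\<^sup>2)"
proof -
  let ?f = "\<lambda>t. (z'' t)\<^sup>2"
  have f: "?f integrable_on {0..1}"
    using integrable_lebesgue01_subinterval(1)[OF L2_imp_integrable_square[OF step_fun_L2]]
    by (auto simp: z''_def)
  have "integral {0..1} ?f = (\<Sum>k<N. integral {node k..node (Suc k)} ?f)"
    unfolding node_def by (rule integral_sum_mesh_cells[OF N f])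
  also have "\<dots> \<le> (\<Sum>k<N. 12 * patch_energy k)"
  proof (rule sum_mono)
    fix k assume "k \<in> {..<N}"
    then have k: "k < N" by simp
    have "integral {node k..node (Suc k)} ?f
        = integral {node k..node (Suc k)} (\<lambda>t. ((node_slope (Suc k) - node_slope k) * real N)\<^sup>2)"
      by (rule integral_spike[of "{node k, node (Suc k)}"]) (auto simp: z''_on_cell[OF k])
    also have "\<dots> = (node_slope (Suc k) - node_slope k)\<^sup>2 * real N"
      using node_le_Suc[of k] N_pos by (simp add: node_Suc power2_eq_square)
    also have "\<dots> \<le> (2 * patch_variation k)\<^sup>2 * real N"
      using square_le_of_abs_le[OF abs_node_slope_diff_le[OF k]] N_pos by simp
    also have "\<dots> = 4 * (patch_variation k)\<^sup>2 * real N"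
      by (simp add: power_mult_distrib)
    also have "\<dots> \<le> 4 * (3 * patch_energy k / real N) * real N"
      using patch_variation_square_le[OF k] N_pos by (intro mult_right_mono mult_left_mono) auto
    also have "\<dots> = 12 * patch_energy k"
      using N_pos by simp
    finally show "integral {node k..node (Suc k)} ?f \<le> 12 * patch_energy k" .
  qed
  also have "\<dots> \<le> 60 * integral {0..1} (\<lambda>t. (g t)\<^sup>2)"
    using sum_patch_energy_le by (simp add: sum_distrib_left[symmetric])
  finally show ?thesis .
qed

lemma z'_has_derivative:
  assumes k: "k < N" and t: "t \<in> {node k<..<node (Suc k)}"
  shows "(z' has_real_derivative z'' t) (at t)"
proof -
  have "((\<lambda>s. node_slope k + (node_slope (Suc k) - node_slope k) * ((s - node k) * real N))
      has_real_derivative (node_slope (Suc k) - node_slope k) * real N) (at t)"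
    by (auto intro!: derivative_eq_intros)
  then have "(z' has_real_derivative (node_slope (Suc k) - node_slope k) * real N) (at t)"
    by (rule has_field_derivative_transform_within_open[of _ _ _ "{node k<..<node (Suc k)}"])
       (use t z'_on_cell[OF k] in auto)
  then show ?thesis using z''_on_cell[OF k t] by simp
qed

lemma z_has_derivative: "x \<in> {0..1} \<Longrightarrow> (z has_real_derivative z' x) (at x within {0..1})"
  using integral_has_real_derivative[OF continuous_z'] by (simp add: z_def[abs_def])

lemma H2_0_z: "H2_0 z z''"
proof (rule H2_0_piecewise_C2I[OF _ z_0 z_1 finite_mesh_nodes continuous_z' z_has_derivative])
  show "L2 z''" by (simp add: z''_def step_fun_L2)
  fix t assume "t \<in> {0<..<1} - mesh_nodes N"
  then obtain k where k: "k < N" "real k / real N < t" "t < real (Suc k) / real N"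
    using mesh_cell_open[OF N, of t] by auto
  then show "(z' has_real_derivative z'' t) (at t)"
    by (intro z'_has_derivative) (auto simp: node_def)
qed

lemma z_in_spline_space: "z \<in> spline_space N"
proof -
  have "\<exists>p q r. \<forall>x\<in>{real k / real N..real (Suc k) / real N}. z x = p + q * x + r * x\<^sup>2"
    if k: "k < N" for k
  proof (intro exI ballI)
    define c where "c = (node_slope (Suc k) - node_slope k) * real N / 2"
    fix x assume "x \<in> {real k / real N..real (Suc k) / real N}"
    then have x: "x \<in> {node k..node (Suc k)}" by (simp add: node_def)
    show "z x = (node_value k - node_slope k * node k + c * (node k)\<^sup>2)
        + (node_slope k - 2 * c * node k) * x + c * x\<^sup>2"
      unfolding z_on_cell[OF k x] cell_quadratic_def c_def[symmetric]
      by (simp add: power2_eq_square algebra_simps)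
  qed
  then show ?thesis
    unfolding spline_space_def using z_0 z_1 continuous_z' z_has_derivative by blast
qed

end

lemma spline_approximation:
  assumes N: "N \<ge> 1" and y: "H2_0 y g"
  obtains z gz where "z \<in> spline_space N" "H2_0 z gz"
    "integral\<^sup>L lebesgue01 (\<lambda>t. (z t - y t)\<^sup>2) \<le> 60 * (L2norm g)\<^sup>2 * (1 / real N) ^ 4"
    "integral\<^sup>L lebesgue01 (\<lambda>t. (gz t)\<^sup>2) \<le> 60 * (L2norm g)\<^sup>2"
proof -
  obtain y' where y': "L2 g" "y 0 = 0" "y 1 = 0" "continuous_on {0..1} y'"
    "\<forall>x\<in>{0..1}. y' x = y' 0 + integral {0..x} g" "\<forall>x\<in>{0..1}. y x = integral {0..x} y'"
    using y by (rule H2_0E)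
  have "integral {0..1} y' = 0"
    using y'(3,6) by simp
  then interpret quasi_interpolation N g y'
    using N y'(1,5) by unfold_locales
  have g: "(L2norm g)\<^sup>2 = integral {0..1} (\<lambda>t. (g t)\<^sup>2)"
    unfolding L2norm_square by (rule L2_square_integral_eq[OF y'(1)])
  have "integral\<^sup>L lebesgue01 (\<lambda>t. (z t - y t)\<^sup>2) = integral\<^sup>L lebesgue01 (\<lambda>t. (z t - v t)\<^sup>2)"
    using y'(6) by (intro Bochner_Integration.integral_cong[OF refl]) (simp add: v_def)
  also have "\<dots> = integral {0..1} (\<lambda>t. (z t - v t)\<^sup>2)"
    by (intro lebesgue_integral_eq_integral continuous_imp_integrable_real continuous_intros
        continuous_z continuous_v) simp
  also have "\<dots> \<le> 60 * (L2norm g)\<^sup>2 * (1 / real N) ^ 4"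
    using integral_square_z_minus_v_le unfolding g by (simp add: power_one_over)
  finally have "integral\<^sup>L lebesgue01 (\<lambda>t. (z t - y t)\<^sup>2) \<le> 60 * (L2norm g)\<^sup>2 * (1 / real N) ^ 4" .
  moreover have "integral\<^sup>L lebesgue01 (\<lambda>t. (z'' t)\<^sup>2) \<le> 60 * (L2norm g)\<^sup>2"
    using integral_square_z''_le L2_square_integral_eq[OF H2_0_imp_L2_second_deriv[OF H2_0_z]]
    unfolding g by simp
  ultimately show ?thesis
    using that z_in_spline_space H2_0_z by blast
qed

lemma discrete_sol_error_square_le:
  assumes N: "N \<ge> 1" and u: "L2 u" and sol: "discrete_sol N ((1 / real N) ^ 4) u y"
    and v: "H2_0 v g"
  shows "integral\<^sup>L lebesgue01 (\<lambda>x. (y x - u x)\<^sup>2)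
    \<le> 2 * (L2norm (\<lambda>x. u x - v x))\<^sup>2 + 180 * ((1 / real N)\<^sup>2 * L2norm g)\<^sup>2"
proof -
  have h4: "(1 / real N) ^ 4 * (L2norm g)\<^sup>2 = ((1 / real N)\<^sup>2 * L2norm g)\<^sup>2"
    by (simp add: power_mult_distrib flip: power_mult)
  obtain z gz where z: "z \<in> spline_space N" "H2_0 z gz"
    "integral\<^sup>L lebesgue01 (\<lambda>t. (z t - v t)\<^sup>2) \<le> 60 * (L2norm g)\<^sup>2 * (1 / real N) ^ 4"
    "integral\<^sup>L lebesgue01 (\<lambda>t. (gz t)\<^sup>2) \<le> 60 * (L2norm g)\<^sup>2"
    using spline_approximation[OF N v] .
  have "integral\<^sup>L lebesgue01 (\<lambda>x. (y x - u x)\<^sup>2)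
      \<le> integral\<^sup>L lebesgue01 (\<lambda>x. (z x - u x)\<^sup>2) + (1 / real N) ^ 4 * integral\<^sup>L lebesgue01 (\<lambda>x. (gz x)\<^sup>2)"
    by (rule discrete_sol_best_approximation[OF N u sol _ z(1,2)]) simp
  also have "integral\<^sup>L lebesgue01 (\<lambda>x. (z x - u x)\<^sup>2)
      \<le> 2 * integral\<^sup>L lebesgue01 (\<lambda>x. (z x - v x)\<^sup>2) + 2 * (L2norm (\<lambda>x. u x - v x))\<^sup>2"
    using integral_square_diff_le[OF H2_0_imp_L2[OF z(2)] H2_0_imp_L2[OF v] u]
    unfolding L2norm_square by (simp add: power2_commute)
  also have "(1 / real N) ^ 4 * integral\<^sup>L lebesgue01 (\<lambda>x. (gz x)\<^sup>2) \<le> (1 / real N) ^ 4 * (60 * (L2norm g)\<^sup>2)"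
    using z(4) by (intro mult_left_mono) auto
  finally show ?thesis
    using z(3) h4 by (simp add: algebra_simps)
qed

lemma discrete_sol_error_le:
  assumes "N \<ge> 1" "L2 u" "discrete_sol N ((1 / real N) ^ 4) u y" "H2_0 v g"
  shows "L2norm (\<lambda>x. y x - u x) \<le> 15 * (L2norm (\<lambda>x. u x - v x) + (1 / real N)\<^sup>2 * L2norm g)"
proof -
  let ?A = "L2norm (\<lambda>x. u x - v x)" and ?X = "(1 / real N)\<^sup>2 * L2norm g"
  have A: "0 \<le> ?A" and X: "0 \<le> ?X"
    by (simp_all add: L2norm_nonneg)
  have "(15 * (?A + ?X))\<^sup>2 = 225 * ?A\<^sup>2 + 450 * (?A * ?X) + 225 * ?X\<^sup>2"
    by (simp add: power2_eq_square algebra_simps)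
  moreover have "0 \<le> ?A * ?X"
    using A X by simp
  ultimately have "2 * ?A\<^sup>2 + 180 * ?X\<^sup>2 \<le> (15 * (?A + ?X))\<^sup>2"
    using zero_le_power2[of ?A] zero_le_power2[of ?X] by linarith
  then have "integral\<^sup>L lebesgue01 (\<lambda>x. (y x - u x)\<^sup>2) \<le> (15 * (?A + ?X))\<^sup>2"
    using discrete_sol_error_square_le[OF assms] by linarith
  then show ?thesis
    by (rule L2norm_le) (use A X in simp)
qed

section \<open>The K-functional\<close>

lemma Kfun_set_nonempty: "{L2norm (\<lambda>x. u x - v x) + t * L2norm g | v g. H2_0 v g} \<noteq> {}"
  using H2_0_zero by blast

lemma Kfun_le: "0 \<le> t \<Longrightarrow> H2_0 v g \<Longrightarrow> Kfun t u \<le> L2norm (\<lambda>x. u x - v x) + t * L2norm g"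
  unfolding Kfun_def
  by (rule cInf_lower) (auto intro!: bdd_belowI[of _ 0] add_nonneg_nonneg simp: L2norm_nonneg)

lemma Kfun_nonneg: "0 \<le> t \<Longrightarrow> 0 \<le> Kfun t u"
  unfolding Kfun_def
  by (rule cInf_greatest[OF Kfun_set_nonempty]) (auto intro!: add_nonneg_nonneg simp: L2norm_nonneg)

lemma Kfun_mono:
  assumes t: "0 \<le> t" "t \<le> t'"
  shows "Kfun t u \<le> Kfun t' u"
  unfolding Kfun_def[of t']
proof (rule cInf_greatest[OF Kfun_set_nonempty])
  fix x assume "x \<in> {L2norm (\<lambda>x. u x - v x) + t' * L2norm g | v g. H2_0 v g}"
  then obtain v g where x: "x = L2norm (\<lambda>x. u x - v x) + t' * L2norm g" "H2_0 v g" by blast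
  have "Kfun t u \<le> L2norm (\<lambda>x. u x - v x) + t * L2norm g" by (rule Kfun_le[OF t(1) x(2)])
  also have "\<dots> \<le> x" unfolding x(1) using mult_right_mono[OF t(2) L2norm_nonneg] by simp
  finally show "Kfun t u \<le> x" .
qed

lemma discrete_sol_error_le_Kfun:
  assumes "N \<ge> 1" "L2 u" "discrete_sol N ((1 / real N) ^ 4) u y"
  shows "L2norm (\<lambda>x. y x - u x) \<le> 15 * Kfun ((1 / real N)\<^sup>2) u"
proof -
  have "L2norm (\<lambda>x. y x - u x) / 15 \<le> Kfun ((1 / real N)\<^sup>2) u"
    unfolding Kfun_def
    by (rule cInf_greatest[OF Kfun_set_nonempty]) (auto dest: discrete_sol_error_le[OF assms])
  then show ?thesis by simp
qed

lemma Kint_integrand_lower_bound: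
  assumes s: "0 < s" "s < 1" and t0: "0 < t0" and t: "t \<in> {t0..2 * t0}"
  shows "(Kfun t0 u)\<^sup>2 / (8 * (t0 powr s)\<^sup>2 * t0) \<le> (t powr (- s) * Kfun t u)\<^sup>2 / t"
proof -
  have tpos: "0 < t" using t t0 by simp
  have "t powr s \<le> (2 * t0) powr s"
    using s t tpos by (intro powr_mono2) auto
  also have "\<dots> = 2 powr s * t0 powr s"
    using t0 by (simp add: powr_mult)
  also have "\<dots> \<le> 2 * t0 powr s"
    using powr_mono[of s 1 2] s by (intro mult_right_mono) auto
  finally have "(t powr s)\<^sup>2 * t \<le> (2 * t0 powr s)\<^sup>2 * (2 * t0)"
    using t tpos by (intro mult_mono power_mono) auto
  moreover have "(Kfun t0 u)\<^sup>2 \<le> (Kfun t u)\<^sup>2"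
    using Kfun_mono[of t0 t u] Kfun_nonneg[of t0 u] t t0 by (intro power_mono) auto
  ultimately have "(Kfun t0 u)\<^sup>2 / ((2 * t0 powr s)\<^sup>2 * (2 * t0)) \<le> (Kfun t u)\<^sup>2 / ((t powr s)\<^sup>2 * t)"
    using tpos by (intro frac_le) auto
  moreover have "(t powr (- s) * Kfun t u)\<^sup>2 / t = (Kfun t u)\<^sup>2 / ((t powr s)\<^sup>2 * t)"
    using tpos by (simp add: powr_minus power2_eq_square field_simps)
  ultimately show ?thesis
    by (simp add: power2_eq_square mult_ac)
qed

lemma Kfun_le_Kint:
  assumes s: "0 < s" "s < 1" and t0: "0 < t0" and finite: "Kint s u < \<infinity>"
  shows "Kfun t0 u \<le> sqrt 8 * t0 powr s * sqrt (enn2real (Kint s u))"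
proof -
  define c where "c = (Kfun t0 u)\<^sup>2 / (8 * (t0 powr s)\<^sup>2 * t0)"
  have c: "0 \<le> c" unfolding c_def using t0 by simp
  have A: "{t0..2 * t0} \<in> sets (lebesgue_on {0<..})"
    by (subst sets_restrict_space_iff) (use t0 in auto)
  have "emeasure (lebesgue_on {0<..}) {t0..2 * t0} = ennreal t0"
    by (subst emeasure_restrict_space) (use t0 in auto)
  then have "ennreal (c * t0) = (\<integral>\<^sup>+ t. ennreal c * indicator {t0..2 * t0} t \<partial>(lebesgue_on {0<..}))"
    using nn_integral_cmult_indicator[OF A, of "ennreal c"] c t0 by (simp add: ennreal_mult)
  also have "\<dots> \<le> Kint s u"
    unfolding Kint_def c_def
    using Kint_integrand_lower_bound[OF s t0] by (intro nn_integral_mono) (auto simp: indicator_def ennreal_leI)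
  finally have "ennreal (c * t0) \<le> Kint s u" .
  then have "c * t0 \<le> enn2real (Kint s u)"
    using enn2real_mono finite c t0 by fastforce
  then have "(Kfun t0 u)\<^sup>2 \<le> (sqrt 8 * t0 powr s * sqrt (enn2real (Kint s u)))\<^sup>2"
    unfolding c_def using t0 by (simp add: power_mult_distrib field_simps)
  then show ?thesis
    by (rule power2_le_imp_le) simp
qed

lemma Kfun_le_L2norm: "0 \<le> t \<Longrightarrow> Kfun t u \<le> L2norm u"
  using Kfun_le[OF _ H2_0_zero, of t u] by (simp add: L2norm_zero)

lemma Kfun_le_second_deriv: "0 \<le> t \<Longrightarrow> H2_0 u g \<Longrightarrow> Kfun t u \<le> t * L2norm g"
  using Kfun_le[of t u g u] by (simp add: L2norm_zero)

lemma Kfun_le_interp_norm_1: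
  assumes t: "0 < t" and u: "u \<in> interp_space 1"
  shows "Kfun t u \<le> t * interp_norm 1 u"
proof -
  define S where "S = {L2norm g | v g. H2_0 v g \<and> (AE x in lebesgue01. u x = v x)}"
  have "S \<noteq> {}"
    using u by (auto simp: S_def interp_space_def)
  moreover have "Kfun t u / t \<le> x" if x: "x \<in> S" for x
  proof -
    obtain v g where "x = L2norm g" "H2_0 v g" "AE x in lebesgue01. u x = v x"
      using x unfolding S_def by blast
    then show ?thesis
      using Kfun_le[of t v g u] L2norm_AE_eq t by (simp add: divide_le_eq mult.commute)
  qed
  ultimately have "Kfun t u / t \<le> Inf S"
    by (rule cInf_greatest)
  then show ?thesis
    using t by (simp add: interp_norm_def S_def divide_le_eq mult.commute)
qed

lemma Kfun_le_interp_norm: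
  assumes t: "0 < t" and s: "s \<in> {0..1}" and u: "u \<in> interp_space s"
  shows "Kfun t u \<le> 3 * t powr s * interp_norm s u"
proof -
  consider "s = 0" | "s = 1" | "0 < s \<and> s < 1" using s by fastforce
  then show ?thesis
  proof cases
    case 1
    then show ?thesis
      using Kfun_le_L2norm[of t u] t L2norm_nonneg[of u] by (simp add: interp_norm_def)
  next
    case 2
    have "0 \<le> t * interp_norm 1 u"
      using order_trans[OF Kfun_nonneg Kfun_le_interp_norm_1[OF t]] t u 2 by auto
    then have "0 \<le> interp_norm 1 u"
      using t by (simp add: zero_le_mult_iff)
    moreover have "Kfun t u \<le> t * interp_norm 1 u"
      using Kfun_le_interp_norm_1[OF t] u 2 by simp
    ultimately show ?thesis
      using 2 t by (simp add: mult_right_mono order_trans)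
  next
    case 3
    then have "s \<noteq> 0" "s \<noteq> 1" "Kint s u < \<infinity>"
      using u by (auto simp: interp_space_def)
    have "sqrt 8 \<le> (3::real)"
      by (rule real_le_lsqrt) auto
    have "Kfun t u \<le> sqrt 8 * t powr s * sqrt (enn2real (Kint s u))"
      using 3 t \<open>Kint s u < \<infinity>\<close> by (intro Kfun_le_Kint) auto
    also have "\<dots> \<le> 3 * t powr s * sqrt (enn2real (Kint s u))"
      using \<open>sqrt 8 \<le> 3\<close> by (intro mult_right_mono) auto
    finally show ?thesis
      using \<open>s \<noteq> 0\<close> \<open>s \<noteq> 1\<close> by (simp add: interp_norm_def)
  qed
qed

theorem mainTheorem12:
  shows "\<exists>c::real. \<forall>N::nat. N \<ge> 1 \<longrightarrow>
    (\<forall>ybar yr. L2 ybar \<longrightarrow> discrete_sol N ((1 / real N) ^ 4) ybar yr \<longrightarrow>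
      L2norm (\<lambda>x. yr x - ybar x) \<le> c * L2norm ybar
      \<and> (\<forall>g. H2_0 ybar g \<longrightarrow>
            L2norm (\<lambda>x. yr x - ybar x) \<le> c * (1 / real N)\<^sup>2 * L2norm g)
      \<and> (\<forall>s\<in>{0..1}. ybar \<in> interp_space s \<longrightarrow>
            L2norm (\<lambda>x. yr x - ybar x) \<le> c * (1 / real N) powr (2 * s) * interp_norm s ybar))"
proof (intro exI[of _ 45] allI impI conjI ballI)
  fix N :: nat and ybar yr :: "real \<Rightarrow> real"
  assume N: "N \<ge> 1" and u: "L2 ybar" and sol: "discrete_sol N ((1 / real N) ^ 4) ybar yr"
  have h: "0 < 1 / real N" using N by simp
  have err: "L2norm (\<lambda>x. yr x - ybar x) \<le> 15 * Kfun ((1 / real N)\<^sup>2) ybar"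
    by (rule discrete_sol_error_le_Kfun[OF N u sol])
  show interp: "L2norm (\<lambda>x. yr x - ybar x) \<le> 45 * (1 / real N) powr (2 * s) * interp_norm s ybar"
    if "s \<in> {0..1}" "ybar \<in> interp_space s" for s
  proof -
    have "((1 / real N)\<^sup>2) powr s = (1 / real N) powr (2 * s)"
      using h by (simp add: powr_powr flip: powr_numeral)
    then show ?thesis
      using err Kfun_le_interp_norm[of "(1 / real N)\<^sup>2" s ybar] that h by simp
  qed
  show "L2norm (\<lambda>x. yr x - ybar x) \<le> 45 * L2norm ybar"
    using interp[of 0] u N by (simp add: interp_space_def interp_norm_def)
  show "L2norm (\<lambda>x. yr x - ybar x) \<le> 45 * (1 / real N)\<^sup>2 * L2norm g" if "H2_0 ybar g" for g
    using err Kfun_le_second_deriv[OF zero_le_power2 that, of "1 / real N"]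
      mult_nonneg_nonneg[OF zero_le_power2 L2norm_nonneg, of "1 / real N" g] by linarith
qed

end
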